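(* The GP 2 program is-connected terminates on any GP 2 host graph in which every node is marked grey and is not a root and every edge is unmarked.
   Context: GP 2 semantics. Host graphs are finite directed graphs (parallel edges and loops allowed) whose nodes and edges carry labels (lists of integers and strings) and marks (nodes: unmarked, red, green, blue, grey; edges: unmarked, red, green, blue, dashed); some nodes are roots. A rule is applied by finding an injective label- and mark-compatible match of its left-hand side (mark "any" matches every mark; roots match roots) satisfying the dangling condition, then changing the matched items as prescribed by the right-hand side. Commands: a rule set call applies one applicable rule, failing if none applies; $P;Q$ sequencing; $P!$ iterates $P$ until it fails (break exits the loop); "try $C$ then $P$ else $Q$" runs $C$ and continues with $P$ on its result if it succeeded, else runs $Q$ on the original graph; "if $C$ then $P$ else $Q$" runs $C$ on a copy then $P$ or $Q$ on the original; fail causes failure. The program is-connected (labels unchanged by all rules): Main = try init then (DFS!; Check); DFS = FORWARD!; try back else break; FORWARD = next_edge; {move, ignore}; Check = if match then fail. Rule edges between nodes 1 and 2 match host edges in either direction. - init: a grey non-root node becomes a blue root. - match: a grey node; no change. - next_edge: blue root 1, node 2 of any mark, unmarked edge between them; edge becomes red. - ignore: blue root 1, blue node 2, red edge between; edge becomes blue. - move: blue root 1, grey node 2, red edge between; node 1 becomes a blue non-root, node 2 a blue root, edge dashed. - back: blue non-root 1, blue root 2, dashed edge between; node 1 becomes a root, node 2 a non-root (both blue), edge blue. *)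

theory Defs
  imports Main
begin

datatype atom = AInt int | AStr string

datatype nmark = NUnmarked | NRed | NGreen | NBlue | NGrey
datatype emark = EUnmarked | ERed | EGreen | EBlue | EDashed

record ('v, 'e) hgraph =
  nodes :: "'v set"
  edges :: "'e set"
  src   :: "'e \<Rightarrow> 'v"
  tgt   :: "'e \<Rightarrow> 'v"
  nlab  :: "'v \<Rightarrow> atom list"
  elab  :: "'e \<Rightarrow> atom list"
  nmark :: "'v \<Rightarrow> nmark"
  emark :: "'e \<Rightarrow> emark"
  root  :: "'v \<Rightarrow> bool"

definition wf_graph :: "('v, 'e) hgraph \<Rightarrow> bool" where
  "wf_graph G \<longleftrightarrow> finite (nodes G) \<and> finite (edges G) \<and>
     (\<forall>e\<in>edges G. src G e \<in> nodes G \<and> tgt G e \<in> nodes G)"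

text \<open>A rule edge between rule nodes 1 and 2 matches a host edge in either direction.\<close>
definition between :: "('v, 'e) hgraph \<Rightarrow> 'e \<Rightarrow> 'v \<Rightarrow> 'v \<Rightarrow> bool" where
  "between G e a b \<longleftrightarrow> e \<in> edges G \<and>
     ((src G e = a \<and> tgt G e = b) \<or> (src G e = b \<and> tgt G e = a))"

text \<open>GP 2 conventions: a root node of the left-hand side matches only host roots, a non-root
  left-hand-side node matches root and non-root host nodes; matches are injective, so nodes 1
  and 2 are distinct. No rule deletes anything, so the dangling condition holds trivially.\<close>

definition r_init :: "('v, 'e) hgraph \<Rightarrow> ('v, 'e) hgraph \<Rightarrow> bool" where
  "r_init G H \<longleftrightarrow> (\<exists>v\<in>nodes G. nmark G v = NGrey \<and>
     H = G\<lparr>nmark := (nmark G)(v := NBlue), root := (root G)(v := True)\<rparr>)"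

definition r_match :: "('v, 'e) hgraph \<Rightarrow> ('v, 'e) hgraph \<Rightarrow> bool" where
  "r_match G H \<longleftrightarrow> (\<exists>v\<in>nodes G. nmark G v = NGrey) \<and> H = G"

definition r_next_edge :: "('v, 'e) hgraph \<Rightarrow> ('v, 'e) hgraph \<Rightarrow> bool" where
  "r_next_edge G H \<longleftrightarrow> (\<exists>a b e. a \<in> nodes G \<and> b \<in> nodes G \<and> a \<noteq> b \<and> between G e a b \<and>
     nmark G a = NBlue \<and> root G a \<and> emark G e = EUnmarked \<and>
     H = G\<lparr>emark := (emark G)(e := ERed)\<rparr>)"

definition r_ignore :: "('v, 'e) hgraph \<Rightarrow> ('v, 'e) hgraph \<Rightarrow> bool" where
  "r_ignore G H \<longleftrightarrow> (\<exists>a b e. a \<in> nodes G \<and> b \<in> nodes G \<and> a \<noteq> b \<and> between G e a b \<and>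
     nmark G a = NBlue \<and> root G a \<and> nmark G b = NBlue \<and> emark G e = ERed \<and>
     H = G\<lparr>emark := (emark G)(e := EBlue)\<rparr>)"

definition r_move :: "('v, 'e) hgraph \<Rightarrow> ('v, 'e) hgraph \<Rightarrow> bool" where
  "r_move G H \<longleftrightarrow> (\<exists>a b e. a \<in> nodes G \<and> b \<in> nodes G \<and> a \<noteq> b \<and> between G e a b \<and>
     nmark G a = NBlue \<and> root G a \<and> nmark G b = NGrey \<and> emark G e = ERed \<and>
     H = G\<lparr>nmark := (nmark G)(a := NBlue, b := NBlue),
            root := (root G)(a := False, b := True),
            emark := (emark G)(e := EDashed)\<rparr>)"

definition r_back :: "('v, 'e) hgraph \<Rightarrow> ('v, 'e) hgraph \<Rightarrow> bool" where
  "r_back G H \<longleftrightarrow> (\<exists>a b e. a \<in> nodes G \<and> b \<in> nodes G \<and> a \<noteq> b \<and> between G e a b \<and>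
     nmark G a = NBlue \<and> nmark G b = NBlue \<and> root G b \<and> emark G e = EDashed \<and>
     H = G\<lparr>nmark := (nmark G)(a := NBlue, b := NBlue),
            root := (root G)(a := True, b := False),
            emark := (emark G)(e := EBlue)\<rparr>)"

datatype 'g cmd =
    Call "('g \<Rightarrow> 'g \<Rightarrow> bool) list"
  | Seq "'g cmd" "'g cmd"
  | Loop "'g cmd"
  | Try "'g cmd" "'g cmd" "'g cmd"
  | If "'g cmd" "'g cmd" "'g cmd"
  | Skip | Break | Fail

datatype 'g result = Ok 'g | Failed | Brk 'g

inductive exec :: "'g cmd \<Rightarrow> 'g \<Rightarrow> 'g result \<Rightarrow> bool" where
  call_ok:   "r \<in> set rs \<Longrightarrow> r G H \<Longrightarrow> exec (Call rs) G (Ok H)"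
| call_fail: "(\<forall>r\<in>set rs. \<forall>H. \<not> r G H) \<Longrightarrow> exec (Call rs) G Failed"
| seq_ok:    "exec P G (Ok H) \<Longrightarrow> exec Q H r \<Longrightarrow> exec (Seq P Q) G r"
| seq_fail:  "exec P G Failed \<Longrightarrow> exec (Seq P Q) G Failed"
| seq_brk:   "exec P G (Brk H) \<Longrightarrow> exec (Seq P Q) G (Brk H)"
| loop_ok:   "exec P G (Ok H) \<Longrightarrow> exec (Loop P) H r \<Longrightarrow> exec (Loop P) G r"
| loop_fail: "exec P G Failed \<Longrightarrow> exec (Loop P) G (Ok G)"
| loop_brk:  "exec P G (Brk H) \<Longrightarrow> exec (Loop P) G (Ok H)"
| try_ok:    "exec C G (Ok H) \<Longrightarrow> exec P H r \<Longrightarrow> exec (Try C P Q) G r"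
| try_fail:  "exec C G Failed \<Longrightarrow> exec Q G r \<Longrightarrow> exec (Try C P Q) G r"
| try_brk:   "exec C G (Brk H) \<Longrightarrow> exec (Try C P Q) G (Brk H)"
| if_ok:     "exec C G (Ok H) \<Longrightarrow> exec P G r \<Longrightarrow> exec (If C P Q) G r"
| if_fail:   "exec C G Failed \<Longrightarrow> exec Q G r \<Longrightarrow> exec (If C P Q) G r"
| if_brk:    "exec C G (Brk H) \<Longrightarrow> exec (If C P Q) G (Brk H)"
| skip:      "exec Skip G (Ok G)"
| break:     "exec Break G (Brk G)"
| fail:      "exec Fail G Failed"

text \<open>A program can diverge from G if some execution from G is infinite
  (coinductively: some loop is iterated forever along some execution).\<close>
coinductive diverges :: "'g cmd \<Rightarrow> 'g \<Rightarrow> bool" where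
  "diverges P G \<Longrightarrow> diverges (Seq P Q) G"
| "exec P G (Ok H) \<Longrightarrow> diverges Q H \<Longrightarrow> diverges (Seq P Q) G"
| "diverges P G \<Longrightarrow> diverges (Loop P) G"
| "exec P G (Ok H) \<Longrightarrow> diverges (Loop P) H \<Longrightarrow> diverges (Loop P) G"
| "diverges C G \<Longrightarrow> diverges (Try C P Q) G"
| "exec C G (Ok H) \<Longrightarrow> diverges P H \<Longrightarrow> diverges (Try C P Q) G"
| "exec C G Failed \<Longrightarrow> diverges Q G \<Longrightarrow> diverges (Try C P Q) G"
| "diverges C G \<Longrightarrow> diverges (If C P Q) G"
| "exec C G (Ok H) \<Longrightarrow> diverges P G \<Longrightarrow> diverges (If C P Q) G"
| "exec C G Failed \<Longrightarrow> diverges Q G \<Longrightarrow> diverges (If C P Q) G"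

definition terminates :: "'g cmd \<Rightarrow> 'g \<Rightarrow> bool" where
  "terminates P G \<longleftrightarrow> \<not> diverges P G"

definition FORWARD :: "('v, 'e) hgraph cmd" where
  "FORWARD = Seq (Call [r_next_edge]) (Call [r_move, r_ignore])"

definition DFS :: "('v, 'e) hgraph cmd" where
  "DFS = Seq (Loop FORWARD) (Try (Call [r_back]) Skip Break)"

definition Check :: "('v, 'e) hgraph cmd" where
  "Check = If (Call [r_match]) Fail Skip"

definition is_connected :: "('v, 'e) hgraph cmd" where
  "is_connected = Try (Call [r_init]) (Seq (Loop DFS) Check) Skip"

end

theory Submission
  imports Defs
begin

text \<open>Weight each edge by its mark: unmarked 3, red 2, dashed 1, blue 0. Each of next_edge,
  ignore, move and back lowers the mark of one edge along this chain and leaves the other edges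
  alone, and init does not touch edges at all. Hence on a graph with finitely many edges the
  total weight strictly decreases in every iteration of the only two loops, FORWARD! and DFS!,
  so neither can run forever.\<close>

fun loop_free :: "'g cmd \<Rightarrow> bool" where
  "loop_free (Seq P Q) \<longleftrightarrow> loop_free P \<and> loop_free Q"
| "loop_free (Loop P) \<longleftrightarrow> False"
| "loop_free (Try C P Q) \<longleftrightarrow> loop_free C \<and> loop_free P \<and> loop_free Q"
| "loop_free (If C P Q) \<longleftrightarrow> loop_free C \<and> loop_free P \<and> loop_free Q"
| "loop_free _ \<longleftrightarrow> True"

fun rules_of :: "'g cmd \<Rightarrow> ('g \<Rightarrow> 'g \<Rightarrow> bool) set" where
  "rules_of (Call rs) = set rs"
| "rules_of (Seq P Q) = rules_of P \<union> rules_of Q"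
| "rules_of (Loop P) = rules_of P"
| "rules_of (Try C P Q) = rules_of C \<union> rules_of P \<union> rules_of Q"
| "rules_of (If C P Q) = rules_of C \<union> rules_of P \<union> rules_of Q"
| "rules_of _ = {}"

lemma loop_free_not_diverges: "loop_free P \<Longrightarrow> \<not> diverges P G"
  by (induction P arbitrary: G) (auto elim: diverges.cases)

lemma not_diverges_Seq:
  assumes "\<not> diverges P G" and "\<And>H. exec P G (Ok H) \<Longrightarrow> \<not> diverges Q H"
  shows "\<not> diverges (Seq P Q) G"
  using assms by (auto elim: diverges.cases)

lemma not_diverges_Try:
  assumes "\<not> diverges C G" and "\<And>H. exec C G (Ok H) \<Longrightarrow> \<not> diverges P H"
    and "exec C G Failed \<Longrightarrow> \<not> diverges Q G"
  shows "\<not> diverges (Try C P Q) G"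
  using assms by (auto elim: diverges.cases)

definition nonincreasing_rule :: "('g \<Rightarrow> bool) \<Rightarrow> ('g \<Rightarrow> nat) \<Rightarrow> ('g \<Rightarrow> 'g \<Rightarrow> bool) \<Rightarrow> bool" where
  "nonincreasing_rule I f r \<longleftrightarrow> (\<forall>G H. I G \<longrightarrow> r G H \<longrightarrow> I H \<and> f H \<le> f G)"

definition decreasing_rule :: "('g \<Rightarrow> bool) \<Rightarrow> ('g \<Rightarrow> nat) \<Rightarrow> ('g \<Rightarrow> 'g \<Rightarrow> bool) \<Rightarrow> bool" where
  "decreasing_rule I f r \<longleftrightarrow> (\<forall>G H. I G \<longrightarrow> r G H \<longrightarrow> I H \<and> f H < f G)"

lemma decreasing_rule_imp_nonincreasing: "decreasing_rule I f r \<Longrightarrow> nonincreasing_rule I f r"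
  unfolding decreasing_rule_def nonincreasing_rule_def by (meson less_imp_le)

lemma exec_nonincreasing:
  assumes "exec P G res" and "\<forall>r\<in>rules_of P. nonincreasing_rule I f r" and "I G"
    and "res = Ok H \<or> res = Brk H"
  shows "I H \<and> f H \<le> f G"
  using assms
proof (induction P G res arbitrary: H rule: exec.induct)
  case (call_ok r rs G H')
  then show ?case by (auto simp: nonincreasing_rule_def)
next
  case (seq_ok P G K Q res)
  then show ?case by (metis Un_iff rules_of.simps(2) le_trans)
next
  case (loop_ok P G K res)
  then show ?case by (metis rules_of.simps(3) le_trans)
next
  case (try_ok C G K P res Q)
  then show ?case by (metis Un_iff rules_of.simps(4) le_trans)
qed auto

lemma not_diverges_Loop:
  fixes f :: "'g \<Rightarrow> nat"
  assumes "\<And>G. I G \<Longrightarrow> \<not> diverges P G"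
    and "\<And>G H. I G \<Longrightarrow> exec P G (Ok H) \<Longrightarrow> I H \<and> f H < f G"
  shows "I G \<Longrightarrow> \<not> diverges (Loop P) G"
proof (induction "f G" arbitrary: G rule: less_induct)
  case less
  show ?case
  proof
    assume "diverges (Loop P) G"
    then show False
      by (cases rule: diverges.cases) (use assms less in blast)+
  qed
qed

fun edge_weight :: "emark \<Rightarrow> nat" where
  "edge_weight EUnmarked = 3"
| "edge_weight ERed = 2"
| "edge_weight EDashed = 1"
| "edge_weight _ = 0"

definition mark_weight :: "('v, 'e) hgraph \<Rightarrow> nat" where
  "mark_weight G = (\<Sum>e\<in>edges G. edge_weight (emark G e))"

lemma mark_weight_update_less:
  assumes "finite (edges G)" and "e \<in> edges G" and "edge_weight m < edge_weight (emark G e)"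
    and "edges H = edges G" and "emark H = (emark G)(e := m)"
  shows "mark_weight H < mark_weight G"
  unfolding mark_weight_def assms(4,5)
  by (rule sum_strict_mono_ex1) (use assms(1-3) in auto)

lemma decreasing_r_next_edge: "decreasing_rule (\<lambda>G. finite (edges G)) mark_weight r_next_edge"
  unfolding decreasing_rule_def r_next_edge_def between_def
  by (auto intro!: mark_weight_update_less[where m = ERed])

lemma decreasing_r_ignore: "decreasing_rule (\<lambda>G. finite (edges G)) mark_weight r_ignore"
  unfolding decreasing_rule_def r_ignore_def between_def
  by (auto intro!: mark_weight_update_less[where m = EBlue])

lemma decreasing_r_move: "decreasing_rule (\<lambda>G. finite (edges G)) mark_weight r_move"
  unfolding decreasing_rule_def r_move_def between_def
  by (auto intro!: mark_weight_update_less[where m = EDashed])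

lemma decreasing_r_back: "decreasing_rule (\<lambda>G. finite (edges G)) mark_weight r_back"
  unfolding decreasing_rule_def r_back_def between_def
  by (auto intro!: mark_weight_update_less[where m = EBlue])

lemma exec_FORWARD_decreasing:
  assumes "finite (edges G)" and "exec FORWARD G (Ok H)"
  shows "finite (edges H) \<and> mark_weight H < mark_weight G"
proof -
  obtain K where "r_next_edge G K" and "r_move K H \<or> r_ignore K H"
    using assms(2) unfolding FORWARD_def
    by (auto elim!: exec.cases[of "Seq _ _"] exec.cases[of "Call _"])
  then show ?thesis
    using assms(1) decreasing_r_next_edge decreasing_r_move decreasing_r_ignore
    unfolding decreasing_rule_def by (meson order.strict_trans)
qed

lemma not_diverges_Loop_FORWARD: "finite (edges G) \<Longrightarrow> \<not> diverges (Loop FORWARD) G"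
  by (rule not_diverges_Loop[where I = "\<lambda>G. finite (edges G)" and f = mark_weight])
    (auto simp: FORWARD_def loop_free_not_diverges exec_FORWARD_decreasing)

lemma exec_DFS_decreasing:
  assumes "finite (edges G)" and "exec DFS G (Ok H)"
  shows "finite (edges H) \<and> mark_weight H < mark_weight G"
proof -
  \<comment> \<open>if back does not apply, the body ends in Break and its result is not Ok\<close>
  obtain K where forward: "exec (Loop FORWARD) G (Ok K)" and "r_back K H"
    using assms(2) unfolding DFS_def
    by (auto elim!: exec.cases[of "Seq _ _"] exec.cases[of "Try _ _ _"] exec.cases[of "Call _"]
        exec.cases[of Skip] exec.cases[of Break])
  moreover have "finite (edges K) \<and> mark_weight K \<le> mark_weight G"
    by (rule exec_nonincreasing[where I = "\<lambda>G. finite (edges G)", OF forward])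
      (auto simp: FORWARD_def assms(1) intro!: decreasing_rule_imp_nonincreasing
        decreasing_r_next_edge decreasing_r_move decreasing_r_ignore)
  ultimately show ?thesis
    using decreasing_r_back unfolding decreasing_rule_def by (meson order.strict_trans2)
qed

lemma not_diverges_DFS: "finite (edges G) \<Longrightarrow> \<not> diverges DFS G"
  unfolding DFS_def
  by (rule not_diverges_Seq) (simp_all add: not_diverges_Loop_FORWARD loop_free_not_diverges)

lemma not_diverges_Loop_DFS: "finite (edges G) \<Longrightarrow> \<not> diverges (Loop DFS) G"
  by (rule not_diverges_Loop[where I = "\<lambda>G. finite (edges G)" and f = mark_weight])
    (simp_all add: not_diverges_DFS exec_DFS_decreasing)

lemma is_connected_terminates:
  assumes "finite (edges G)"
  shows "terminates is_connected G"
  unfolding terminates_def is_connected_def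
proof (rule not_diverges_Try)
  fix H
  assume "exec (Call [r_init]) G (Ok H)"
  then have "finite (edges H)"
    using assms by (cases rule: exec.cases) (auto simp: r_init_def)
  then show "\<not> diverges (Seq (Loop DFS) Check) H"
    by (rule not_diverges_Seq[OF not_diverges_Loop_DFS]) (simp add: Check_def loop_free_not_diverges)
qed (simp_all add: loop_free_not_diverges)

theorem mainTheorem3:
  fixes G :: "('v, 'e) hgraph"
  assumes "wf_graph G"
    and "\<forall>v\<in>nodes G. nmark G v = NGrey \<and> \<not> root G v"
    and "\<forall>e\<in>edges G. emark G e = EUnmarked"
  shows "terminates (is_connected :: ('v, 'e) hgraph cmd) G"
  using assms(1) by (simp add: wf_graph_def is_connected_terminates)

end
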